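(* Let $\mathcal{G}=(\mathcal{N},\mathcal{E})$ be a connected undirected graph with $\mathcal{N}=\{1,\dots,N\}$, $\omega_1,\dots,\omega_N\in\mathbb{R}$, and $\{\Delta_{ij}\}$ a formation (real $\Delta_{ij}$ for each ordered pair with $\{i,j\}\in\mathcal{E}$, $\Delta_{ji}=-\Delta_{ij}$) with $\Delta_{ij}\not\equiv 0,\pi\pmod{2\pi}$ for all edges. Let $\bar\omega\in\mathbb{R}$, let $\mathcal{E}=\mathcal{E}^a\sqcup\mathcal{E}^r$ be a partition, $\mathcal{N}_i^a=\{j:\{i,j\}\in\mathcal{E}^a\}$, $\mathcal{N}_i^r=\{j:\{i,j\}\in\mathcal{E}^r\}$, and fix one attractive coupling function $f^*$ and one repulsive coupling function $g^*$. Put $f^*_{ij}:=f^*(\Delta_{ij})$ for $j\in\mathcal{N}_i^a$ and $g^*_{ij}:=g^*(\Delta_{ij})$ for $j\in\mathcal{N}_i^r$, and define $\mathcal{N}_i^{a,+}=\{j\in\mathcal{N}_i^a:\operatorname{sgn}(\bar\omega-\omega_i)=\operatorname{sgn}(f^*_{ij})\}$, $\mathcal{N}_i^{a,-}=\{j\in\mathcal{N}_i^a:\operatorname{sgn}(\bar\omega-\omega_i)=-\operatorname{sgn}(f^*_{ij})\}$, $\mathcal{N}_i^{r,+}=\{j\in\mathcal{N}_i^r:\operatorname{sgn}(\bar\omega-\omega_i)=\operatorname{sgn}(g^*_{ij})\}$, $\mathcal{N}_i^{r,-}=\{j\in\mathcal{N}_i^r:\operatorname{sgn}(\bar\omega-\omega_i)=-\operatorname{sgn}(g^*_{ij})\}$.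 Assume that for each $i\in\mathcal{N}$ the set $\mathcal{N}_i^+:=\mathcal{N}_i^{a,+}\cup\mathcal{N}_i^{r,+}$ is non-empty, and let $S_i:=\sum_{j\in\mathcal{N}_i^{a,+}}(f^*_{ij})^2+\sum_{j\in\mathcal{N}_i^{r,+}}(g^*_{ij})^2$. Consider the equations $$(\ast)\qquad \bar\omega-\omega_i=\sum_{j\in\mathcal{N}_i^a}\alpha_{ij}f^*_{ij}+\sum_{j\in\mathcal{N}_i^r}\beta_{ij}g^*_{ij},\qquad i\in\mathcal{N},$$ in unknowns $\alpha_{ij}$ ($i\in\mathcal{N}$, $j\in\mathcal{N}_i^a$) and $\beta_{ij}$ ($i\in\mathcal{N}$, $j\in\mathcal{N}_i^r$), with energy $E(\alpha,\beta)=\sum_{i\in\mathcal{N}}\big(\sum_{j\in\mathcal{N}_i^a}\alpha_{ij}^2+\sum_{j\in\mathcal{N}_i^r}\beta_{ij}^2\big)$. Then: (i) there exist $\alpha_{ij}>0$ and $\beta_{ij}>0$ satisfying $(\ast)$; (ii) for $\epsilon>0$ define $\alpha^\epsilon_{ij}=\epsilon$ for $j\in\mathcal{N}_i^{a,-}$, $\alpha^\epsilon_{ij}=|\bar\omega-\omega_i|\,|f^*_{ij}|/S_i$ for $j\in\mathcal{N}_i^{a,+}$, $\beta^\epsilon_{ij}=\epsilon$ for $j\in\mathcal{N}_i^{r,-}$, $\beta^\epsilon_{ij}=|\bar\omega-\omega_i|\,|g^*_{ij}|/S_i$ for $j\in\mathcal{N}_i^{r,+}$. Then every positive solution $(\alpha,\beta)$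 of $(\ast)$ satisfies $E(\alpha,\beta)\ge E_0:=\sum_{i\in\mathcal{N}}(\bar\omega-\omega_i)^2/S_i$, the infimum of $E$ over positive solutions of $(\ast)$ equals $E_0$, and as $\epsilon\to 0^+$ the family $(\alpha^\epsilon,\beta^\epsilon)$ satisfies $(\ast)$ up to an error tending to $0$ and $E(\alpha^\epsilon,\beta^\epsilon)\to E_0$; i.e. $(\alpha^\epsilon,\beta^\epsilon)$ is a minimum-energy solution up to arbitrary precision.
   Context: An attractive coupling function is a $2\pi$-periodic function $f:\mathbb{R}\to\mathbb{R}$, twice differentiable on $(-\pi,\pi)$, with $f(0)=0$, $f'>0$ on $(-\pi,\pi)$, $f(t)\to-\infty$ as $t\to(2n+1)\pi^+$ and $f(t)\to+\infty$ as $t\to(2n+1)\pi^-$ for every integer $n$. A repulsive coupling function is a $2\pi$-periodic $g:\mathbb{R}\to\mathbb{R}$, twice differentiable on $(0,2\pi)$, with $g(\pi)=0$, $g'>0$ on $(0,2\pi)$, $g(t)\to-\infty$ as $t\to 2n\pi^+$ and $g(t)\to+\infty$ as $t\to 2n\pi^-$ for every integer $n$. The coupling functions on the network are the scaled prototypes $f_{ij}=\alpha_{ij}f^*$ (attractive edges) and $g_{ij}=\beta_{ij}g^*$ (repulsive edges), so $(\ast)$ is the condition that the formation moving rigidly with frequency $\bar\omega$ solves $\dot\theta_i=\omega_i+\sum_{j\in\mathcal{N}_i^a}f_{ij}(\theta_j-\theta_i)+\sum_{j\in\mathcal{N}_i^r}g_{ij}(\theta_j-\theta_i)$. Here $\operatorname{sgn}$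 is the sign function with $\operatorname{sgn}(0)=0$. *)

theory Defs
  imports "HOL-Analysis.Analysis"
begin

definition attractive_coupling :: "(real \<Rightarrow> real) \<Rightarrow> bool" where
  "attractive_coupling f \<longleftrightarrow>
     (\<forall>t. f (t + 2 * pi) = f t) \<and>
     (\<forall>t\<in>{-pi<..<pi}. f differentiable (at t) \<and> (deriv f) differentiable (at t)) \<and>
     f 0 = 0 \<and>
     (\<forall>t\<in>{-pi<..<pi}. deriv f t > 0) \<and>
     (\<forall>n::int. filterlim f at_bot (at_right ((2 * of_int n + 1) * pi)) \<and>
               filterlim f at_top (at_left ((2 * of_int n + 1) * pi)))"

definition repulsive_coupling :: "(real \<Rightarrow> real) \<Rightarrow> bool" where
  "repulsive_coupling g \<longleftrightarrow>
     (\<forall>t. g (t + 2 * pi) = g t) \<and>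
     (\<forall>t\<in>{0<..<2 * pi}. g differentiable (at t) \<and> (deriv g) differentiable (at t)) \<and>
     g pi = 0 \<and>
     (\<forall>t\<in>{0<..<2 * pi}. deriv g t > 0) \<and>
     (\<forall>n::int. filterlim g at_bot (at_right (2 * of_int n * pi)) \<and>
               filterlim g at_top (at_left (2 * of_int n * pi)))"

definition undirected_graph :: "nat \<Rightarrow> (nat \<Rightarrow> nat \<Rightarrow> bool) \<Rightarrow> bool" where
  "undirected_graph N E \<longleftrightarrow>
     (\<forall>i j. E i j \<longrightarrow> i \<in> {1..N} \<and> j \<in> {1..N}) \<and>
     (\<forall>i j. E i j \<longrightarrow> E j i) \<and> (\<forall>i. \<not> E i i)"

definition graph_connected :: "nat \<Rightarrow> (nat \<Rightarrow> nat \<Rightarrow> bool) \<Rightarrow> bool" where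
  "graph_connected N E \<longleftrightarrow>
     (\<forall>i\<in>{1..N}. \<forall>j\<in>{1..N}. (i, j) \<in> {(a, b). E a b}\<^sup>*)"

definition nbr :: "nat \<Rightarrow> (nat \<Rightarrow> nat \<Rightarrow> bool) \<Rightarrow> nat \<Rightarrow> nat set" where
  "nbr N R i = {j \<in> {1..N}. R i j}"

definition formation :: "(nat \<Rightarrow> nat \<Rightarrow> bool) \<Rightarrow> (nat \<Rightarrow> nat \<Rightarrow> real) \<Rightarrow> bool" where
  "formation E \<Delta> \<longleftrightarrow> (\<forall>i j. E i j \<longrightarrow> \<Delta> j i = - \<Delta> i j)"

definition plus_nbr ::
  "nat \<Rightarrow> (nat \<Rightarrow> nat \<Rightarrow> bool) \<Rightarrow> (real \<Rightarrow> real) \<Rightarrow> (nat \<Rightarrow> nat \<Rightarrow> real) \<Rightarrow> (nat \<Rightarrow> real) \<Rightarrow> real \<Rightarrow> nat \<Rightarrow> nat set" where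
  "plus_nbr N R h \<Delta> \<omega> \<omega>b i = {j \<in> nbr N R i. sgn (\<omega>b - \<omega> i) = sgn (h (\<Delta> i j))}"

definition minus_nbr ::
  "nat \<Rightarrow> (nat \<Rightarrow> nat \<Rightarrow> bool) \<Rightarrow> (real \<Rightarrow> real) \<Rightarrow> (nat \<Rightarrow> nat \<Rightarrow> real) \<Rightarrow> (nat \<Rightarrow> real) \<Rightarrow> real \<Rightarrow> nat \<Rightarrow> nat set" where
  "minus_nbr N R h \<Delta> \<omega> \<omega>b i = {j \<in> nbr N R i. sgn (\<omega>b - \<omega> i) = - sgn (h (\<Delta> i j))}"

definition coupling_sum ::
  "nat \<Rightarrow> (nat \<Rightarrow> nat \<Rightarrow> bool) \<Rightarrow> (nat \<Rightarrow> nat \<Rightarrow> bool) \<Rightarrow> (real \<Rightarrow> real) \<Rightarrow> (real \<Rightarrow> real)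
     \<Rightarrow> (nat \<Rightarrow> nat \<Rightarrow> real) \<Rightarrow> (nat \<Rightarrow> nat \<Rightarrow> real) \<Rightarrow> (nat \<Rightarrow> nat \<Rightarrow> real) \<Rightarrow> nat \<Rightarrow> real" where
  "coupling_sum N Ea Er fs gs \<Delta> \<alpha> \<beta> i =
     (\<Sum>j\<in>nbr N Ea i. \<alpha> i j * fs (\<Delta> i j)) + (\<Sum>j\<in>nbr N Er i. \<beta> i j * gs (\<Delta> i j))"

definition positive_solution ::
  "nat \<Rightarrow> (nat \<Rightarrow> nat \<Rightarrow> bool) \<Rightarrow> (nat \<Rightarrow> nat \<Rightarrow> bool) \<Rightarrow> (real \<Rightarrow> real) \<Rightarrow> (real \<Rightarrow> real)
     \<Rightarrow> (nat \<Rightarrow> nat \<Rightarrow> real) \<Rightarrow> (nat \<Rightarrow> real) \<Rightarrow> real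
     \<Rightarrow> (nat \<Rightarrow> nat \<Rightarrow> real) \<Rightarrow> (nat \<Rightarrow> nat \<Rightarrow> real) \<Rightarrow> bool" where
  "positive_solution N Ea Er fs gs \<Delta> \<omega> \<omega>b \<alpha> \<beta> \<longleftrightarrow>
     (\<forall>i\<in>{1..N}. \<forall>j\<in>nbr N Ea i. \<alpha> i j > 0) \<and>
     (\<forall>i\<in>{1..N}. \<forall>j\<in>nbr N Er i. \<beta> i j > 0) \<and>
     (\<forall>i\<in>{1..N}. \<omega>b - \<omega> i = coupling_sum N Ea Er fs gs \<Delta> \<alpha> \<beta> i)"

definition energy ::
  "nat \<Rightarrow> (nat \<Rightarrow> nat \<Rightarrow> bool) \<Rightarrow> (nat \<Rightarrow> nat \<Rightarrow> bool)
     \<Rightarrow> (nat \<Rightarrow> nat \<Rightarrow> real) \<Rightarrow> (nat \<Rightarrow> nat \<Rightarrow> real) \<Rightarrow> real" where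
  "energy N Ea Er \<alpha> \<beta> =
     (\<Sum>i\<in>{1..N}. (\<Sum>j\<in>nbr N Ea i. (\<alpha> i j)\<^sup>2) + (\<Sum>j\<in>nbr N Er i. (\<beta> i j)\<^sup>2))"


definition S_sum ::
  "nat \<Rightarrow> (nat \<Rightarrow> nat \<Rightarrow> bool) \<Rightarrow> (nat \<Rightarrow> nat \<Rightarrow> bool) \<Rightarrow> (real \<Rightarrow> real) \<Rightarrow> (real \<Rightarrow> real)
     \<Rightarrow> (nat \<Rightarrow> nat \<Rightarrow> real) \<Rightarrow> (nat \<Rightarrow> real) \<Rightarrow> real \<Rightarrow> nat \<Rightarrow> real" where
  "S_sum N Ea Er fs gs \<Delta> \<omega> \<omega>b i =
     (\<Sum>j\<in>plus_nbr N Ea fs \<Delta> \<omega> \<omega>b i. (fs (\<Delta> i j))\<^sup>2)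
   + (\<Sum>j\<in>plus_nbr N Er gs \<Delta> \<omega> \<omega>b i. (gs (\<Delta> i j))\<^sup>2)"

definition E0 ::
  "nat \<Rightarrow> (nat \<Rightarrow> nat \<Rightarrow> bool) \<Rightarrow> (nat \<Rightarrow> nat \<Rightarrow> bool) \<Rightarrow> (real \<Rightarrow> real) \<Rightarrow> (real \<Rightarrow> real)
     \<Rightarrow> (nat \<Rightarrow> nat \<Rightarrow> real) \<Rightarrow> (nat \<Rightarrow> real) \<Rightarrow> real \<Rightarrow> real" where
  "E0 N Ea Er fs gs \<Delta> \<omega> \<omega>b =
     (\<Sum>i\<in>{1..N}. (\<omega>b - \<omega> i)\<^sup>2 / S_sum N Ea Er fs gs \<Delta> \<omega> \<omega>b i)"

text \<open>For the attractive part call with (R,h) = (Ea,fs), for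
  the repulsive part with (R,h) = (Er,gs). Value epsilon on the minus-set,
  the explicit formula otherwise (only entries j in N_i^R matter).\<close>
definition eps_coeff ::
  "nat \<Rightarrow> (nat \<Rightarrow> nat \<Rightarrow> bool) \<Rightarrow> (nat \<Rightarrow> nat \<Rightarrow> bool) \<Rightarrow> (real \<Rightarrow> real) \<Rightarrow> (real \<Rightarrow> real)
     \<Rightarrow> (nat \<Rightarrow> nat \<Rightarrow> real) \<Rightarrow> (nat \<Rightarrow> real) \<Rightarrow> real
     \<Rightarrow> (nat \<Rightarrow> nat \<Rightarrow> bool) \<Rightarrow> (real \<Rightarrow> real) \<Rightarrow> real \<Rightarrow> nat \<Rightarrow> nat \<Rightarrow> real" where
  "eps_coeff N Ea Er fs gs \<Delta> \<omega> \<omega>b R h \<epsilon> i j =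
     (if j \<in> minus_nbr N R h \<Delta> \<omega> \<omega>b i then \<epsilon>
      else \<bar>\<omega>b - \<omega> i\<bar> * \<bar>h (\<Delta> i j)\<bar> / S_sum N Ea Er fs gs \<Delta> \<omega> \<omega>b i)"

end

theory Submission
  imports Defs
begin

text \<open>The equations decouple node by node. Write \<open>d\<^sub>i = \<omega>b - \<omega>\<^sub>i\<close> and \<open>h\<close> for the coupling
  values on the links of node \<open>i\<close>. Multiplying (*) by \<open>sgn d\<^sub>i\<close>, the links whose value has the
  opposite sign only lower the right-hand side, so \<open>\<bar>d\<^sub>i\<bar> \<le> \<Sum>\<^sub>+ c\<^sub>j \<bar>h\<^sub>j\<bar>\<close>, and Cauchy-Schwarz gives
  \<open>d\<^sub>i\<^sup>2 / S\<^sub>i \<le> \<Sum> c\<^sub>j\<^sup>2\<close>. Conversely, \<open>\<epsilon>\<close> on the opposing links and \<open>(\<bar>d\<^sub>i\<bar> + \<epsilon> K\<^sub>i) \<bar>h\<^sub>j\<bar> / S\<^sub>i\<close> on the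
  agreeing ones, with \<open>K\<^sub>i\<close> the sum of the opposing \<open>\<bar>h\<^sub>j\<bar>\<close>, solve (*) exactly, and their energy
  tends to \<open>E\<^sub>0\<close> as \<open>\<epsilon> \<rightarrow> 0\<close>; the family of the theorem omits the correction \<open>\<epsilon> K\<^sub>i\<close> and so
  misses (*) by \<open>\<epsilon> K\<^sub>i\<close>.\<close>

lemma periodic_increasing_nonzero:
  fixes f :: "real \<Rightarrow> real"
  assumes periodic: "\<forall>t. f (t + 2 * pi) = f t"
    and diff: "\<forall>t\<in>{a - pi<..<a + pi}. f differentiable (at t)"
    and deriv_pos: "\<forall>t\<in>{a - pi<..<a + pi}. deriv f t > 0"
    and zero: "f a = 0"
    and off_grid: "\<And>k::int. t \<noteq> a + of_int k * pi"
  shows "f t \<noteq> 0"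
proof -
  interpret periodic_fun_simple f "2 * pi"
    by standard (use periodic in simp)
  have increasing: "f x < f y" if "a - pi < x" "x < y" "y < a + pi" for x y
  proof (rule DERIV_pos_imp_increasing[OF \<open>x < y\<close>])
    fix z assume "x \<le> z" "z \<le> y"
    with that have z: "z \<in> {a - pi<..<a + pi}" by auto
    then have "DERIV f z :> deriv f z"
      using diff by (simp add: DERIV_deriv_iff_real_differentiable)
    with z deriv_pos show "\<exists>l. DERIV f z :> l \<and> l > 0" by blast
  qed
  define k where "k = \<lfloor>(t - a + pi) / (2 * pi)\<rfloor>"
  define s where "s = t - of_int k * (2 * pi)"
  have "of_int k \<le> (t - a + pi) / (2 * pi)" "(t - a + pi) / (2 * pi) < of_int k + 1"
    unfolding k_def by linarith+
  then have "a - pi \<le> s" "s < a + pi"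
    unfolding s_def by (simp_all add: field_simps)
  moreover have "s \<noteq> a - pi" "s \<noteq> a"
    using off_grid[of "2 * k - 1"] off_grid[of "2 * k"] unfolding s_def by (auto simp: algebra_simps)
  ultimately have "f s < f a \<or> f a < f s"
    using increasing[of s a] increasing[of a s] pi_gt_zero by (cases "s < a") auto
  moreover have "f t = f s"
    using plus_of_int[of s k] unfolding s_def by simp
  ultimately show ?thesis
    using zero by auto
qed

lemma attractive_coupling_nonzero:
  assumes "attractive_coupling f" "\<And>k::int. t \<noteq> of_int k * pi"
  shows "f t \<noteq> 0"
  using assms by (intro periodic_increasing_nonzero[where a = 0]) (auto simp: attractive_coupling_def)

lemma repulsive_coupling_nonzero:
  assumes "repulsive_coupling g" "\<And>k::int. t \<noteq> of_int k * pi"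
  shows "g t \<noteq> 0"
proof -
  have "t \<noteq> pi + of_int k * pi" for k :: int
    using assms(2)[of "k + 1"] by (simp add: algebra_simps)
  moreover have "pi - pi = 0" "pi + pi = 2 * pi"
    by simp_all
  ultimately show ?thesis
    using assms(1) unfolding repulsive_coupling_def
    by (intro periodic_increasing_nonzero[where a = pi]) simp_all
qed

lemma sgn_mult_le_if_agree:
  fixes d h :: real
  shows "sgn d * h \<le> (if sgn d = sgn h then \<bar>h\<bar> else 0)"
  by (auto simp: sgn_if)

lemma sq_div_agreeing_sum_le:
  fixes c h :: "'a \<Rightarrow> real"
  assumes "finite X" and nonneg: "\<forall>x\<in>X. c x \<ge> 0" and eq: "d = (\<Sum>x\<in>X. c x * h x)"
  shows "d\<^sup>2 / (\<Sum>x\<in>{x\<in>X. sgn d = sgn (h x)}. (h x)\<^sup>2) \<le> (\<Sum>x\<in>X. (c x)\<^sup>2)"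
proof -
  define P where "P = {x\<in>X. sgn d = sgn (h x)}"
  define S where "S = (\<Sum>x\<in>P. (h x)\<^sup>2)"
  have S_nonneg: "S \<ge> 0"
    unfolding S_def by (simp add: sum_nonneg)
  have "\<bar>d\<bar> = sgn d * (\<Sum>x\<in>X. c x * h x)"
    unfolding eq[symmetric] by (simp add: abs_sgn mult.commute)
  also have "\<dots> = (\<Sum>x\<in>X. c x * (sgn d * h x))"
    by (simp add: sum_distrib_left mult.left_commute)
  also have "\<dots> \<le> (\<Sum>x\<in>X. if sgn d = sgn (h x) then c x * \<bar>h x\<bar> else 0)"
  proof (rule sum_mono)
    fix x assume "x \<in> X"
    then have "c x * (sgn d * h x) \<le> c x * (if sgn d = sgn (h x) then \<bar>h x\<bar> else 0)"
      using nonneg by (intro mult_left_mono sgn_mult_le_if_agree) auto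
    then show "c x * (sgn d * h x) \<le> (if sgn d = sgn (h x) then c x * \<bar>h x\<bar> else 0)"
      by (simp only: if_distrib mult_zero_right)
  qed
  also have "\<dots> = (\<Sum>x\<in>P. c x * \<bar>h x\<bar>)"
    unfolding P_def using \<open>finite X\<close> by (simp add: sum.inter_filter)
  finally have "d\<^sup>2 \<le> (\<Sum>x\<in>P. c x * \<bar>h x\<bar>)\<^sup>2"
    by (metis abs_ge_zero power2_abs power_mono)
  also have "\<dots> \<le> (\<Sum>x\<in>P. (c x)\<^sup>2) * S"
    unfolding S_def using Cauchy_Schwarz_ineq_sum[of c "\<lambda>x. \<bar>h x\<bar>" P] by simp
  also have "\<dots> \<le> (\<Sum>x\<in>X. (c x)\<^sup>2) * S"
    using \<open>finite X\<close> S_nonneg by (intro mult_right_mono sum_mono2) (auto simp: P_def)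
  finally have "d\<^sup>2 \<le> (\<Sum>x\<in>X. (c x)\<^sup>2) * S" .
  then have "d\<^sup>2 / S \<le> (\<Sum>x\<in>X. (c x)\<^sup>2)"
    using S_nonneg by (cases "S = 0") (simp_all add: sum_nonneg pos_divide_le_eq)
  then show ?thesis
    unfolding S_def P_def .
qed

text \<open>Proportionality to \<open>\<bar>h\<bar>\<close> on the agreeing indices is the equality case of the
  Cauchy-Schwarz step in \<open>sq_div_agreeing_sum_le\<close>.\<close>
definition split_coeff :: "real \<Rightarrow> ('a \<Rightarrow> real) \<Rightarrow> real \<Rightarrow> real \<Rightarrow> 'a \<Rightarrow> real" where
  "split_coeff d h t \<epsilon> x = (if sgn d = - sgn (h x) then \<epsilon> else t * \<bar>h x\<bar>)"

lemma sum_split_coeff_mult: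
  fixes h :: "'a \<Rightarrow> real"
  assumes "finite X" "d \<noteq> 0" "\<forall>x\<in>X. h x \<noteq> 0"
  shows "(\<Sum>x\<in>X. split_coeff d h t \<epsilon> x * h x)
    = sgn d * (t * (\<Sum>x\<in>{x\<in>X. sgn d = sgn (h x)}. (h x)\<^sup>2)
               - \<epsilon> * (\<Sum>x\<in>{x\<in>X. sgn d = - sgn (h x)}. \<bar>h x\<bar>))"
proof -
  have "sgn d * (\<Sum>x\<in>X. split_coeff d h t \<epsilon> x * h x)
      = (\<Sum>x\<in>X. sgn d * (split_coeff d h t \<epsilon> x * h x))"
    by (simp add: sum_distrib_left)
  also have "\<dots> = (\<Sum>x\<in>X. (if sgn d = sgn (h x) then t * (h x)\<^sup>2 else 0)
                           - (if sgn d = - sgn (h x) then \<epsilon> * \<bar>h x\<bar> else 0))"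
  proof (rule sum.cong[OF refl])
    fix x assume "x \<in> X"
    with assms(2,3) show "sgn d * (split_coeff d h t \<epsilon> x * h x)
      = (if sgn d = sgn (h x) then t * (h x)\<^sup>2 else 0) - (if sgn d = - sgn (h x) then \<epsilon> * \<bar>h x\<bar> else 0)"
      by (cases "d > 0"; cases "h x > 0") (auto simp: split_coeff_def sgn_if power2_eq_square)
  qed
  also have "\<dots> = t * (\<Sum>x\<in>{x\<in>X. sgn d = sgn (h x)}. (h x)\<^sup>2)
                 - \<epsilon> * (\<Sum>x\<in>{x\<in>X. sgn d = - sgn (h x)}. \<bar>h x\<bar>)"
    using assms(1) by (simp add: sum_subtractf sum.inter_filter[symmetric] sum_distrib_left)
  finally have "sgn d * (sgn d * (\<Sum>x\<in>X. split_coeff d h t \<epsilon> x * h x))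
      = sgn d * (t * (\<Sum>x\<in>{x\<in>X. sgn d = sgn (h x)}. (h x)\<^sup>2)
                 - \<epsilon> * (\<Sum>x\<in>{x\<in>X. sgn d = - sgn (h x)}. \<bar>h x\<bar>))"
    by simp
  with assms(2) show ?thesis
    by simp
qed

lemma sum_split_coeff_sq:
  fixes h :: "'a \<Rightarrow> real"
  assumes "finite X" "d \<noteq> 0" "\<forall>x\<in>X. h x \<noteq> 0"
  shows "(\<Sum>x\<in>X. (split_coeff d h t \<epsilon> x)\<^sup>2)
    = t\<^sup>2 * (\<Sum>x\<in>{x\<in>X. sgn d = sgn (h x)}. (h x)\<^sup>2) + \<epsilon>\<^sup>2 * card {x\<in>X. sgn d = - sgn (h x)}"
proof -
  have "(\<Sum>x\<in>X. (split_coeff d h t \<epsilon> x)\<^sup>2)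
      = (\<Sum>x\<in>X. (if sgn d = sgn (h x) then t\<^sup>2 * (h x)\<^sup>2 else 0)
               + (if sgn d = - sgn (h x) then \<epsilon>\<^sup>2 else 0))"
  proof (rule sum.cong[OF refl])
    fix x assume "x \<in> X"
    with assms(2,3) show "(split_coeff d h t \<epsilon> x)\<^sup>2
      = (if sgn d = sgn (h x) then t\<^sup>2 * (h x)\<^sup>2 else 0) + (if sgn d = - sgn (h x) then \<epsilon>\<^sup>2 else 0)"
      by (cases "d > 0"; cases "h x > 0") (auto simp: split_coeff_def sgn_if power_mult_distrib)
  qed
  also have "\<dots> = t\<^sup>2 * (\<Sum>x\<in>{x\<in>X. sgn d = sgn (h x)}. (h x)\<^sup>2) + \<epsilon>\<^sup>2 * card {x\<in>X. sgn d = - sgn (h x)}"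
    using assms(1) by (simp add: sum.distrib sum.inter_filter[symmetric] sum_distrib_left)
  finally show ?thesis .
qed

locale coupled_network =
  fixes N :: nat and Ea Er :: "nat \<Rightarrow> nat \<Rightarrow> bool" and fs gs :: "real \<Rightarrow> real"
    and \<Delta> :: "nat \<Rightarrow> nat \<Rightarrow> real" and \<omega> :: "nat \<Rightarrow> real" and \<omega>b :: real
  assumes fs_nonzero: "\<And>i j. Ea i j \<Longrightarrow> fs (\<Delta> i j) \<noteq> 0"
    and gs_nonzero: "\<And>i j. Er i j \<Longrightarrow> gs (\<Delta> i j) \<noteq> 0"
    and plus_nbr_nonempty:
      "\<And>i. i \<in> {1..N} \<Longrightarrow> plus_nbr N Ea fs \<Delta> \<omega> \<omega>b i \<union> plus_nbr N Er gs \<Delta> \<omega> \<omega>b i \<noteq> {}"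
begin

abbreviation S :: "nat \<Rightarrow> real" where
  "S \<equiv> S_sum N Ea Er fs gs \<Delta> \<omega> \<omega>b"

text \<open>The attractive and the repulsive neighbours of node \<open>i\<close> are merged into one index set,
  tagged by \<open>Inl\<close> and \<open>Inr\<close>, so that equation (*) at node \<open>i\<close> becomes a single weighted sum.\<close>
definition links :: "nat \<Rightarrow> (nat + nat) set" where
  "links i = nbr N Ea i <+> nbr N Er i"

definition link_weight :: "nat \<Rightarrow> nat + nat \<Rightarrow> real" where
  "link_weight i = case_sum (\<lambda>j. fs (\<Delta> i j)) (\<lambda>j. gs (\<Delta> i j))"

definition link_coeff :: "(nat \<Rightarrow> nat \<Rightarrow> real) \<Rightarrow> (nat \<Rightarrow> nat \<Rightarrow> real) \<Rightarrow> nat \<Rightarrow> nat + nat \<Rightarrow> real" where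
  "link_coeff \<alpha> \<beta> i = case_sum (\<alpha> i) (\<beta> i)"

definition opposing_links :: "nat \<Rightarrow> (nat + nat) set" where
  "opposing_links i = {x \<in> links i. sgn (\<omega>b - \<omega> i) = - sgn (link_weight i x)}"

definition opposing_weight :: "nat \<Rightarrow> real" where
  "opposing_weight i = (\<Sum>x\<in>opposing_links i. \<bar>link_weight i x\<bar>)"

lemma finite_links: "finite (links i)"
  by (simp add: links_def nbr_def)

lemma link_weight_nonzero: "x \<in> links i \<Longrightarrow> link_weight i x \<noteq> 0"
  by (auto simp: links_def link_weight_def nbr_def fs_nonzero gs_nonzero)

lemma opposing_weight_nonneg: "opposing_weight i \<ge> 0"
  by (simp add: opposing_weight_def sum_nonneg)

lemma sum_links:
  "(\<Sum>x\<in>links i. F x) = (\<Sum>j\<in>nbr N Ea i. F (Inl j)) + (\<Sum>j\<in>nbr N Er i. F (Inr j))"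
  by (simp add: links_def nbr_def sum.Plus comp_def)

lemma coupling_sum_links:
  "coupling_sum N Ea Er fs gs \<Delta> \<alpha> \<beta> i = (\<Sum>x\<in>links i. link_coeff \<alpha> \<beta> i x * link_weight i x)"
  by (simp add: sum_links coupling_sum_def link_coeff_def link_weight_def)

lemma energy_links:
  "energy N Ea Er \<alpha> \<beta> = (\<Sum>i\<in>{1..N}. \<Sum>x\<in>links i. (link_coeff \<alpha> \<beta> i x)\<^sup>2)"
  by (simp add: sum_links energy_def link_coeff_def)

lemma agreeing_links:
  "{x \<in> links i. sgn (\<omega>b - \<omega> i) = sgn (link_weight i x)}
     = plus_nbr N Ea fs \<Delta> \<omega> \<omega>b i <+> plus_nbr N Er gs \<Delta> \<omega> \<omega>b i"
  by (auto simp: links_def plus_nbr_def link_weight_def)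

lemma S_sum_links:
  "S i = (\<Sum>x\<in>{x \<in> links i. sgn (\<omega>b - \<omega> i) = sgn (link_weight i x)}. (link_weight i x)\<^sup>2)"
  unfolding agreeing_links by (simp add: S_sum_def sum.Plus plus_nbr_def nbr_def comp_def link_weight_def)

lemma agreeing_link_exists:
  assumes "i \<in> {1..N}"
  obtains x where "x \<in> links i" "sgn (\<omega>b - \<omega> i) = sgn (link_weight i x)"
proof -
  have "plus_nbr N Ea fs \<Delta> \<omega> \<omega>b i <+> plus_nbr N Er gs \<Delta> \<omega> \<omega>b i \<noteq> {}"
    using plus_nbr_nonempty[OF assms] by simp
  then show ?thesis
    using that unfolding agreeing_links[symmetric] by blast
qed

lemma gap_nonzero: "i \<in> {1..N} \<Longrightarrow> \<omega>b - \<omega> i \<noteq> 0"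
  by (metis agreeing_link_exists link_weight_nonzero sgn_eq_0_iff)

lemma S_sum_pos:
  assumes "i \<in> {1..N}"
  shows "S i > 0"
proof -
  obtain x where "x \<in> links i" "sgn (\<omega>b - \<omega> i) = sgn (link_weight i x)"
    using agreeing_link_exists[OF assms] .
  then show ?thesis
    unfolding S_sum_links using finite_links link_weight_nonzero by (intro sum_pos2) auto
qed

lemma coupling_sum_split_coeff:
  assumes "i \<in> {1..N}"
    and "\<forall>x\<in>links i. link_coeff \<alpha> \<beta> i x = split_coeff (\<omega>b - \<omega> i) (link_weight i) t \<epsilon> x"
  shows "coupling_sum N Ea Er fs gs \<Delta> \<alpha> \<beta> i = sgn (\<omega>b - \<omega> i) * (t * S i - \<epsilon> * opposing_weight i)"
  using assms sum_split_coeff_mult[OF finite_links[of i] gap_nonzero[OF assms(1)], of "link_weight i" t \<epsilon>]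
  by (simp add: coupling_sum_links S_sum_links opposing_weight_def opposing_links_def
      link_weight_nonzero cong: sum.cong)

lemma energy_split_coeff:
  assumes "\<forall>i\<in>{1..N}. \<forall>x\<in>links i.
      link_coeff \<alpha> \<beta> i x = split_coeff (\<omega>b - \<omega> i) (link_weight i) (t i) \<epsilon> x"
  shows "energy N Ea Er \<alpha> \<beta> = (\<Sum>i\<in>{1..N}. (t i)\<^sup>2 * S i + \<epsilon>\<^sup>2 * card (opposing_links i))"
  unfolding energy_links
proof (rule sum.cong[OF refl])
  fix i assume i: "i \<in> {1..N}"
  then show "(\<Sum>x\<in>links i. (link_coeff \<alpha> \<beta> i x)\<^sup>2) = (t i)\<^sup>2 * S i + \<epsilon>\<^sup>2 * card (opposing_links i)"
    using assms sum_split_coeff_sq[OF finite_links[of i] gap_nonzero[OF i], of "link_weight i" "t i" \<epsilon>]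
    by (simp add: S_sum_links opposing_links_def link_weight_nonzero cong: sum.cong)
qed

lemma energy_tendsto_E0:
  assumes coeff: "\<And>\<epsilon>. \<forall>i\<in>{1..N}. \<forall>x\<in>links i.
      link_coeff (\<alpha> \<epsilon>) (\<beta> \<epsilon>) i x = split_coeff (\<omega>b - \<omega> i) (link_weight i) (t \<epsilon> i) \<epsilon> x"
    and scale: "\<And>i. i \<in> {1..N} \<Longrightarrow> ((\<lambda>\<epsilon>. t \<epsilon> i) \<longlongrightarrow> \<bar>\<omega>b - \<omega> i\<bar> / S i) (at_right 0)"
  shows "((\<lambda>\<epsilon>. energy N Ea Er (\<alpha> \<epsilon>) (\<beta> \<epsilon>)) \<longlongrightarrow> E0 N Ea Er fs gs \<Delta> \<omega> \<omega>b) (at_right 0)"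
proof -
  have "((\<lambda>\<epsilon>. \<Sum>i\<in>{1..N}. (t \<epsilon> i)\<^sup>2 * S i + \<epsilon>\<^sup>2 * card (opposing_links i))
      \<longlongrightarrow> (\<Sum>i\<in>{1..N}. (\<bar>\<omega>b - \<omega> i\<bar> / S i)\<^sup>2 * S i + (0::real)\<^sup>2 * card (opposing_links i))) (at_right 0)"
    by (intro tendsto_sum tendsto_add tendsto_mult tendsto_power scale tendsto_const tendsto_ident_at)
  also have "(\<Sum>i\<in>{1..N}. (\<bar>\<omega>b - \<omega> i\<bar> / S i)\<^sup>2 * S i + (0::real)\<^sup>2 * card (opposing_links i))
      = E0 N Ea Er fs gs \<Delta> \<omega> \<omega>b"
    unfolding E0_def using S_sum_pos
    by (intro sum.cong refl) (simp add: power_divide power2_eq_square)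
  finally show ?thesis
    unfolding energy_split_coeff[OF coeff] .
qed

lemma energy_ge_E0:
  assumes "positive_solution N Ea Er fs gs \<Delta> \<omega> \<omega>b \<alpha> \<beta>"
  shows "E0 N Ea Er fs gs \<Delta> \<omega> \<omega>b \<le> energy N Ea Er \<alpha> \<beta>"
  unfolding E0_def energy_links
proof (rule sum_mono)
  fix i assume i: "i \<in> {1..N}"
  have "\<forall>x\<in>links i. link_coeff \<alpha> \<beta> i x \<ge> 0"
    using assms i by (auto simp: positive_solution_def links_def link_coeff_def less_imp_le)
  moreover have "\<omega>b - \<omega> i = (\<Sum>x\<in>links i. link_coeff \<alpha> \<beta> i x * link_weight i x)"
    using assms i by (simp add: positive_solution_def coupling_sum_links)
  ultimately show "(\<omega>b - \<omega> i)\<^sup>2 / S i \<le> (\<Sum>x\<in>links i. (link_coeff \<alpha> \<beta> i x)\<^sup>2)"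
    unfolding S_sum_links by (rule sq_div_agreeing_sum_le[OF finite_links])
qed

text \<open>The scale on the agreeing links is chosen so that \<open>t S\<^sub>i - \<epsilon> K\<^sub>i = \<bar>\<omega>b - \<omega>\<^sub>i\<bar>\<close>,
  with \<open>K\<^sub>i\<close> the opposing weight, so that (*) holds exactly.\<close>
definition exact_coeff :: "(real \<Rightarrow> real) \<Rightarrow> real \<Rightarrow> nat \<Rightarrow> nat \<Rightarrow> real" where
  "exact_coeff h \<epsilon> i = split_coeff (\<omega>b - \<omega> i) (\<lambda>j. h (\<Delta> i j))
     ((\<bar>\<omega>b - \<omega> i\<bar> + \<epsilon> * opposing_weight i) / S i) \<epsilon>"

lemma link_coeff_exact_coeff:
  "link_coeff (exact_coeff fs \<epsilon>) (exact_coeff gs \<epsilon>) i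
     = split_coeff (\<omega>b - \<omega> i) (link_weight i) ((\<bar>\<omega>b - \<omega> i\<bar> + \<epsilon> * opposing_weight i) / S i) \<epsilon>"
  by (auto simp: fun_eq_iff link_coeff_def exact_coeff_def link_weight_def split_coeff_def
      split: sum.split)

lemma exact_coeff_positive_solution:
  assumes "\<epsilon> > 0"
  shows "positive_solution N Ea Er fs gs \<Delta> \<omega> \<omega>b (exact_coeff fs \<epsilon>) (exact_coeff gs \<epsilon>)"
proof -
  have scale_pos: "(\<bar>\<omega>b - \<omega> i\<bar> + \<epsilon> * opposing_weight i) / S i > 0" if "i \<in> {1..N}" for i
    using that assms gap_nonzero S_sum_pos opposing_weight_nonneg
    by (intro divide_pos_pos add_pos_nonneg) auto
  have "exact_coeff h \<epsilon> i j > 0" if "i \<in> {1..N}" "h (\<Delta> i j) \<noteq> 0" for h i j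
    using that assms mult_pos_pos[OF scale_pos[OF that(1)], of "\<bar>h (\<Delta> i j)\<bar>"]
    by (simp add: exact_coeff_def split_coeff_def)
  moreover have "\<omega>b - \<omega> i = coupling_sum N Ea Er fs gs \<Delta> (exact_coeff fs \<epsilon>) (exact_coeff gs \<epsilon>) i"
    if "i \<in> {1..N}" for i
  proof -
    have "S i \<noteq> 0"
      using S_sum_pos[OF that] by simp
    moreover have "coupling_sum N Ea Er fs gs \<Delta> (exact_coeff fs \<epsilon>) (exact_coeff gs \<epsilon>) i
        = sgn (\<omega>b - \<omega> i) * ((\<bar>\<omega>b - \<omega> i\<bar> + \<epsilon> * opposing_weight i) / S i * S i
                                - \<epsilon> * opposing_weight i)"
      by (rule coupling_sum_split_coeff[OF that]) (simp add: link_coeff_exact_coeff)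
    ultimately show ?thesis
      by (simp add: sgn_mult_abs)
  qed
  ultimately show ?thesis
    unfolding positive_solution_def by (auto simp: nbr_def fs_nonzero gs_nonzero)
qed

lemma energy_exact_coeff_tendsto:
  "((\<lambda>\<epsilon>. energy N Ea Er (exact_coeff fs \<epsilon>) (exact_coeff gs \<epsilon>)) \<longlongrightarrow> E0 N Ea Er fs gs \<Delta> \<omega> \<omega>b)
     (at_right 0)"
proof (rule energy_tendsto_E0)
  fix i assume "i \<in> {1..N}"
  then have "((\<lambda>\<epsilon>. (\<bar>\<omega>b - \<omega> i\<bar> + \<epsilon> * opposing_weight i) / S i)
      \<longlongrightarrow> (\<bar>\<omega>b - \<omega> i\<bar> + 0 * opposing_weight i) / S i) (at_right 0)"
    using S_sum_pos[of i] by (intro tendsto_intros tendsto_ident_at) auto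
  then show "((\<lambda>\<epsilon>. (\<bar>\<omega>b - \<omega> i\<bar> + \<epsilon> * opposing_weight i) / S i) \<longlongrightarrow> \<bar>\<omega>b - \<omega> i\<bar> / S i) (at_right 0)"
    by simp
qed (simp add: link_coeff_exact_coeff)

lemma Inf_energy_eq_E0:
  "Inf {energy N Ea Er \<alpha> \<beta> | \<alpha> \<beta>. positive_solution N Ea Er fs gs \<Delta> \<omega> \<omega>b \<alpha> \<beta>}
     = E0 N Ea Er fs gs \<Delta> \<omega> \<omega>b"
proof (rule cInf_eq_non_empty)
  show "{energy N Ea Er \<alpha> \<beta> | \<alpha> \<beta>. positive_solution N Ea Er fs gs \<Delta> \<omega> \<omega>b \<alpha> \<beta>} \<noteq> {}"
    using exact_coeff_positive_solution[OF zero_less_one] by blast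
next
  fix e assume "e \<in> {energy N Ea Er \<alpha> \<beta> | \<alpha> \<beta>. positive_solution N Ea Er fs gs \<Delta> \<omega> \<omega>b \<alpha> \<beta>}"
  then show "E0 N Ea Er fs gs \<Delta> \<omega> \<omega>b \<le> e"
    using energy_ge_E0 by blast
next
  fix y
  assume lower: "\<And>e. e \<in> {energy N Ea Er \<alpha> \<beta> | \<alpha> \<beta>. positive_solution N Ea Er fs gs \<Delta> \<omega> \<omega>b \<alpha> \<beta>}
    \<Longrightarrow> y \<le> e"
  have "\<forall>\<^sub>F \<epsilon> in at_right 0. y \<le> energy N Ea Er (exact_coeff fs \<epsilon>) (exact_coeff gs \<epsilon>)"
    using eventually_at_right_less[of "0::real"]
    by (rule eventually_mono) (use lower exact_coeff_positive_solution in blast)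
  then show "y \<le> E0 N Ea Er fs gs \<Delta> \<omega> \<omega>b"
    by (rule tendsto_lowerbound[OF energy_exact_coeff_tendsto]) simp
qed

lemma link_coeff_eps_coeff:
  "x \<in> links i \<Longrightarrow>
    link_coeff (eps_coeff N Ea Er fs gs \<Delta> \<omega> \<omega>b Ea fs \<epsilon>) (eps_coeff N Ea Er fs gs \<Delta> \<omega> \<omega>b Er gs \<epsilon>) i x
      = split_coeff (\<omega>b - \<omega> i) (link_weight i) (\<bar>\<omega>b - \<omega> i\<bar> / S i) \<epsilon> x"
  by (auto simp: links_def link_coeff_def eps_coeff_def minus_nbr_def split_coeff_def link_weight_def)

lemma eps_coeff_error_tendsto:
  assumes "i \<in> {1..N}"
  shows "((\<lambda>\<epsilon>. coupling_sum N Ea Er fs gs \<Delta>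
              (eps_coeff N Ea Er fs gs \<Delta> \<omega> \<omega>b Ea fs \<epsilon>) (eps_coeff N Ea Er fs gs \<Delta> \<omega> \<omega>b Er gs \<epsilon>) i
            - (\<omega>b - \<omega> i)) \<longlongrightarrow> 0) (at_right 0)"
proof -
  have "coupling_sum N Ea Er fs gs \<Delta>
          (eps_coeff N Ea Er fs gs \<Delta> \<omega> \<omega>b Ea fs \<epsilon>) (eps_coeff N Ea Er fs gs \<Delta> \<omega> \<omega>b Er gs \<epsilon>) i
        - (\<omega>b - \<omega> i) = \<epsilon> * - (sgn (\<omega>b - \<omega> i) * opposing_weight i)" for \<epsilon>
  proof -
    have "S i \<noteq> 0"
      using S_sum_pos[OF assms] by simp
    moreover have "coupling_sum N Ea Er fs gs \<Delta>
          (eps_coeff N Ea Er fs gs \<Delta> \<omega> \<omega>b Ea fs \<epsilon>) (eps_coeff N Ea Er fs gs \<Delta> \<omega> \<omega>b Er gs \<epsilon>) i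
        = sgn (\<omega>b - \<omega> i) * (\<bar>\<omega>b - \<omega> i\<bar> / S i * S i - \<epsilon> * opposing_weight i)"
      by (rule coupling_sum_split_coeff[OF assms]) (simp add: link_coeff_eps_coeff)
    ultimately show ?thesis
      by (simp add: abs_mult_sgn algebra_simps)
  qed
  moreover have "((\<lambda>\<epsilon>::real. \<epsilon> * - (sgn (\<omega>b - \<omega> i) * opposing_weight i)) \<longlongrightarrow> 0) (at_right 0)"
    by (rule tendsto_mult_left_zero[OF tendsto_ident_at])
  ultimately show ?thesis
    by simp
qed

lemma energy_eps_coeff_tendsto:
  "((\<lambda>\<epsilon>. energy N Ea Er (eps_coeff N Ea Er fs gs \<Delta> \<omega> \<omega>b Ea fs \<epsilon>) (eps_coeff N Ea Er fs gs \<Delta> \<omega> \<omega>b Er gs \<epsilon>))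
     \<longlongrightarrow> E0 N Ea Er fs gs \<Delta> \<omega> \<omega>b) (at_right 0)"
  by (rule energy_tendsto_E0[where t = "\<lambda>\<epsilon> i. \<bar>\<omega>b - \<omega> i\<bar> / S i"]) (simp_all add: link_coeff_eps_coeff)

end

theorem theorem4:
  fixes N :: nat
    and E Ea Er :: "nat \<Rightarrow> nat \<Rightarrow> bool"
    and \<omega> :: "nat \<Rightarrow> real" and \<omega>b :: real
    and \<Delta> :: "nat \<Rightarrow> nat \<Rightarrow> real"
    and fs gs :: "real \<Rightarrow> real"
  assumes graph: "undirected_graph N E"
    and conn: "graph_connected N E"
    and form: "formation E \<Delta>"
    and nondeg: "\<And>i j (k::int). E i j \<Longrightarrow> \<Delta> i j \<noteq> of_int k * pi"
    and part: "\<And>i j. E i j \<longleftrightarrow> Ea i j \<or> Er i j"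
    and disj: "\<And>i j. \<not> (Ea i j \<and> Er i j)"
    and Ea_sym: "\<And>i j. Ea i j \<Longrightarrow> Ea j i"
    and Er_sym: "\<And>i j. Er i j \<Longrightarrow> Er j i"
    and f_att: "attractive_coupling fs"
    and g_rep: "repulsive_coupling gs"
    and nonempty: "\<And>i. i \<in> {1..N} \<Longrightarrow>
        plus_nbr N Ea fs \<Delta> \<omega> \<omega>b i \<union> plus_nbr N Er gs \<Delta> \<omega> \<omega>b i \<noteq> {}"
  shows "(\<exists>\<alpha> \<beta>. positive_solution N Ea Er fs gs \<Delta> \<omega> \<omega>b \<alpha> \<beta>)
       \<and> (\<forall>\<alpha> \<beta>. positive_solution N Ea Er fs gs \<Delta> \<omega> \<omega>b \<alpha> \<beta> \<longrightarrow>
                  energy N Ea Er \<alpha> \<beta> \<ge> E0 N Ea Er fs gs \<Delta> \<omega> \<omega>b)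
       \<and> Inf {energy N Ea Er \<alpha> \<beta> | \<alpha> \<beta>. positive_solution N Ea Er fs gs \<Delta> \<omega> \<omega>b \<alpha> \<beta>}
           = E0 N Ea Er fs gs \<Delta> \<omega> \<omega>b
       \<and> (\<forall>i\<in>{1..N}. ((\<lambda>\<epsilon>. coupling_sum N Ea Er fs gs \<Delta>
                               (eps_coeff N Ea Er fs gs \<Delta> \<omega> \<omega>b Ea fs \<epsilon>)
                               (eps_coeff N Ea Er fs gs \<Delta> \<omega> \<omega>b Er gs \<epsilon>) i - (\<omega>b - \<omega> i))
                         \<longlongrightarrow> 0) (at_right 0))
       \<and> ((\<lambda>\<epsilon>. energy N Ea Er (eps_coeff N Ea Er fs gs \<Delta> \<omega> \<omega>b Ea fs \<epsilon>)
                             (eps_coeff N Ea Er fs gs \<Delta> \<omega> \<omega>b Er gs \<epsilon>))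
            \<longlongrightarrow> E0 N Ea Er fs gs \<Delta> \<omega> \<omega>b) (at_right 0)"
proof -
  interpret coupled_network N Ea Er fs gs \<Delta> \<omega> \<omega>b
  proof
    show "fs (\<Delta> i j) \<noteq> 0" if "Ea i j" for i j
      using attractive_coupling_nonzero[OF f_att] nondeg part that by blast
    show "gs (\<Delta> i j) \<noteq> 0" if "Er i j" for i j
      using repulsive_coupling_nonzero[OF g_rep] nondeg part that by blast
  qed (fact nonempty)
  show ?thesis
    using exact_coeff_positive_solution[OF zero_less_one] energy_ge_E0 Inf_energy_eq_E0
      eps_coeff_error_tendsto energy_eps_coeff_tendsto by blast
qed

end
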